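(* Let $\Omega\subset\mathbb R^n$ be a bounded domain and $\alpha<0$. If $u\in C^2(\Omega)\cap C^1(\overline\Omega)$ is a positive solution of $$\mathrm{div}\left(\frac{Du}{\sqrt{1-|Du|^2}}\right)=\frac{\alpha}{u\sqrt{1-|Du|^2}}\ \text{ in }\Omega,\qquad u=\varphi\ \text{ on }\partial\Omega,\qquad |Du|<1\ \text{ in }\overline\Omega$$ (for some positive boundary function $\varphi$), then $$\max_{\overline\Omega}|Du|=\max_{\partial\Omega}|Du|.$$ *)

theory Defs
  imports "HOL-Analysis.Analysis"
begin

definition divergence :: "('a::euclidean_space \<Rightarrow> 'a) \<Rightarrow> 'a \<Rightarrow> real" where
  "divergence F x = (\<Sum>b\<in>Basis. frechet_derivative F (at x) b \<bullet> b)"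

end

theory Submission
  imports Defs
begin

(*
  Suppose norm (Du x0) exceeded the supremum S of norm Du over the frontier at an interior
  point x0, and let v be a short vector in the direction of Du x0.  The translate difference
  W y = u (y + v) - u y, on the set of y whose segment to y + v lies in the domain, is close to
  Du x0 \<bullet> v near x0 but at most about S * norm v wherever that segment touches the frontier,
  so W attains a positive maximum at a point y0 where it is differentiable.  There
  Du (y0 + v) = Du y0 and the Hessian of u at y0 + v is below the one at y0, so by ellipticity
  the left-hand side of the equation at y0 + v is at most its value at y0; but the right-hand
  side alpha / (u sqrt (1 - norm (Du)^2)) is strictly larger at y0 + v, since
  u (y0 + v) > u y0 and alpha < 0.
*)

lemma has_derivative_shift:
  assumes "(f has_derivative f') (at (x + c))"
  shows "((\<lambda>x. f (x + c)) has_derivative f') (at x)"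
proof -
  have "((\<lambda>x. x + c) has_derivative (\<lambda>h. h)) (at x)"
    by (auto intro!: derivative_eq_intros)
  from has_derivative_compose[OF this assms] show ?thesis
    by simp
qed

lemma has_derivative_along_line:
  assumes "(f has_derivative f') (at (y + t *\<^sub>R v))"
  shows "((\<lambda>s. f (y + s *\<^sub>R v)) has_derivative (\<lambda>s. s *\<^sub>R f' v)) (at t)"
proof -
  have "((\<lambda>s. y + s *\<^sub>R v) has_derivative (\<lambda>s. s *\<^sub>R v)) (at t)"
    by (auto intro!: derivative_eq_intros)
  from has_derivative_compose[OF this assms] show ?thesis
    using linear_scale[OF has_derivative_linear[OF assms]] by simp
qed

lemma has_real_derivative_along_line:
  fixes u :: "'a::real_inner \<Rightarrow> real"
  assumes "(u has_derivative (\<lambda>h. g \<bullet> h)) (at (y + t *\<^sub>R v))"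
  shows "((\<lambda>s. u (y + s *\<^sub>R v)) has_real_derivative (g \<bullet> v)) (at t)"
  using has_derivative_along_line[OF assms]
  by (simp add: has_field_derivative_def mult_commute_abs)

lemma has_real_derivative_inner_along_line:
  fixes G :: "'a::real_inner \<Rightarrow> 'a"
  assumes "(G has_derivative H) (at (y + t *\<^sub>R v))"
  shows "((\<lambda>s. G (y + s *\<^sub>R v) \<bullet> c) has_real_derivative (H v \<bullet> c)) (at t)"
proof -
  have "((\<lambda>s. G (y + s *\<^sub>R v) \<bullet> c) has_derivative (\<lambda>s. (s *\<^sub>R H v) \<bullet> c)) (at t)"
    using has_derivative_along_line[OF assms] by (auto intro!: derivative_eq_intros)
  then show ?thesis by (simp add: has_field_derivative_def mult_commute_abs)
qed

lemma local_max_second_derivative_nonpos: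
  fixes g g' :: "real \<Rightarrow> real"
  assumes "r > 0"
    and max: "\<And>s. 0 \<le> s \<Longrightarrow> s < r \<Longrightarrow> g s \<le> g 0"
    and deriv: "\<And>s. 0 \<le> s \<Longrightarrow> s < r \<Longrightarrow> (g has_real_derivative g' s) (at s)"
    and crit: "g' 0 = 0"
    and deriv2: "(g' has_real_derivative c) (at 0)"
  shows "c \<le> 0"
proof (rule ccontr)
  assume "\<not> c \<le> 0"
  then obtain d where "d > 0" and increasing: "\<And>s. 0 < s \<Longrightarrow> s < d \<Longrightarrow> g' s > 0"
    using DERIV_pos_inc_right[OF deriv2] crit by force
  define t where "t = min d r / 2"
  have t: "0 < t" "t < d" "t < r"
    using \<open>d > 0\<close> \<open>r > 0\<close> by (auto simp: t_def)
  obtain z where "0 < z" "z < t" "g t - g 0 = (t - 0) * g' z"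
    using MVT2[OF \<open>0 < t\<close>, of g g'] deriv t by force
  then have "g t > g 0"
    using increasing[of z] t by (simp add: algebra_simps)
  with max[of t] t show False by simp
qed

lemma local_max_gradient_zero:
  fixes W :: "'a::real_inner \<Rightarrow> real"
  assumes "open S" "y0 \<in> S" and max: "\<forall>y\<in>S. W y \<le> W y0"
    and grad: "(W has_derivative (\<lambda>h. g \<bullet> h)) (at y0)"
  shows "g = 0"
proof -
  have "(\<lambda>h. g \<bullet> h) = (\<lambda>h. 0)"
    using differential_zero_maxmin[OF assms(2,1) grad] max by blast
  then have "g \<bullet> g = 0" by metis
  then show ?thesis by simp
qed

lemma local_max_hessian_nonpos:
  fixes W :: "'a::real_inner \<Rightarrow> real"
  assumes "r > 0" and max: "\<forall>y\<in>ball y0 r. W y \<le> W y0"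
    and grad: "\<forall>y\<in>ball y0 r. (W has_derivative (\<lambda>h. G y \<bullet> h)) (at y)"
    and hess: "(G has_derivative H) (at y0)"
  shows "H k \<bullet> k \<le> 0"
proof (cases "k = 0")
  case True
  then show ?thesis
    using linear_0[OF has_derivative_linear[OF hess]] by simp
next
  case False
  have in_ball: "y0 + s *\<^sub>R k \<in> ball y0 r" if "0 \<le> s" "s < r / norm k" for s
    using that False by (simp add: dist_norm field_simps)
  have "G y0 = 0"
    using local_max_gradient_zero[of "ball y0 r" y0 W] assms by simp
  show ?thesis
  proof (rule local_max_second_derivative_nonpos)
    show "0 < r / norm k" using \<open>r > 0\<close> False by simp
    show "W (y0 + s *\<^sub>R k) \<le> W (y0 + 0 *\<^sub>R k)" if "0 \<le> s" "s < r / norm k" for s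
      using max in_ball[OF that] by simp
    show "((\<lambda>s. W (y0 + s *\<^sub>R k)) has_real_derivative G (y0 + s *\<^sub>R k) \<bullet> k) (at s)"
      if "0 \<le> s" "s < r / norm k" for s
      using has_real_derivative_along_line grad in_ball[OF that] by blast
    show "G (y0 + 0 *\<^sub>R k) \<bullet> k = 0" using \<open>G y0 = 0\<close> by simp
    show "((\<lambda>s. G (y0 + s *\<^sub>R k) \<bullet> k) has_real_derivative H k \<bullet> k) (at 0)"
      using has_real_derivative_inner_along_line[of G H y0 0 k] hess by simp
  qed
qed

lemma has_derivative_spacelike_flux:
  fixes Du :: "'a::real_inner \<Rightarrow> 'a"
  assumes deriv: "(Du has_derivative H) (at z)" and spacelike: "norm (Du z) < 1"
  shows "((\<lambda>y. Du y /\<^sub>R sqrt (1 - (norm (Du y))\<^sup>2)) has_derivative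
     (\<lambda>k. H k /\<^sub>R sqrt (1 - (norm (Du z))\<^sup>2)
        + ((Du z \<bullet> H k) / (sqrt (1 - (norm (Du z))\<^sup>2))^3) *\<^sub>R Du z)) (at z)"
proof -
  define s where "s = sqrt (1 - Du z \<bullet> Du z)"
  have pos: "0 < 1 - Du z \<bullet> Du z"
    using spacelike by (simp add: power2_norm_eq_inner[symmetric] abs_square_less_1)
  then have "s > 0"
    by (simp add: s_def)
  have "((\<lambda>y. 1 - Du y \<bullet> Du y) has_derivative (\<lambda>k. - (H k \<bullet> Du z + Du z \<bullet> H k))) (at z)"
    by (auto intro!: derivative_eq_intros deriv)
  note sqrt = has_derivative_real_sqrt[OF pos this]
  have "sqrt (1 - Du z \<bullet> Du z) \<noteq> 0"
    using pos by simp
  note flux = has_derivative_scaleR[OF Deriv.has_derivative_inverse[OF this sqrt] deriv]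
  have flux_eq: "(\<lambda>y. Du y /\<^sub>R sqrt (1 - (norm (Du y))\<^sup>2))
      = (\<lambda>y. inverse (sqrt (1 - Du y \<bullet> Du y)) *\<^sub>R Du y)"
    by (simp add: power2_norm_eq_inner)
  have s_eq: "sqrt (1 - (norm (Du z))\<^sup>2) = s"
    by (simp add: s_def power2_norm_eq_inner)
  show ?thesis
    unfolding flux_eq s_eq
    by (rule has_derivative_eq_rhs[OF flux], rule ext)
      (use \<open>s > 0\<close> in \<open>auto simp: s_def inner_commute power3_eq_cube field_simps\<close>)
qed

lemma divergence_spacelike_flux:
  fixes Du :: "'a::euclidean_space \<Rightarrow> 'a"
  assumes deriv: "(Du has_derivative H) (at z)" and spacelike: "norm (Du z) < 1"
  shows "divergence (\<lambda>y. Du y /\<^sub>R sqrt (1 - (norm (Du y))\<^sup>2)) z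
     = (\<Sum>b\<in>Basis. H b \<bullet> b) / sqrt (1 - (norm (Du z))\<^sup>2)
       + (Du z \<bullet> H (Du z)) / (sqrt (1 - (norm (Du z))\<^sup>2))^3"
proof -
  define s where "s = sqrt (1 - (norm (Du z))\<^sup>2)"
  have components: "H (Du z) \<bullet> Du z = (\<Sum>b\<in>Basis. (Du z \<bullet> b) * (H b \<bullet> Du z))"
    using Linear_Algebra.linear_componentwise[OF has_derivative_linear[OF deriv]] by blast
  have "divergence (\<lambda>y. Du y /\<^sub>R sqrt (1 - (norm (Du y))\<^sup>2)) z
     = (\<Sum>b\<in>Basis. (H b /\<^sub>R s + ((Du z \<bullet> H b) / s^3) *\<^sub>R Du z) \<bullet> b)"
    unfolding divergence_def s_def
      frechet_derivative_at[OF has_derivative_spacelike_flux[OF deriv spacelike], symmetric]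
    by simp
  also have "\<dots> = (\<Sum>b\<in>Basis. (H b \<bullet> b) / s) + (\<Sum>b\<in>Basis. (Du z \<bullet> b) * (H b \<bullet> Du z)) / s^3"
    unfolding sum_divide_distrib sum.distrib[symmetric]
    by (intro sum.cong refl) (simp add: inner_add_right inner_commute divide_inverse)
  also have "\<dots> = (\<Sum>b\<in>Basis. H b \<bullet> b) / s + (Du z \<bullet> H (Du z)) / s^3"
    using components by (simp add: sum_divide_distrib inner_commute)
  finally show ?thesis
    unfolding s_def .
qed

lemma spacelike_flux_divergence_mono:
  fixes H1 H2 :: "'a::euclidean_space \<Rightarrow> 'a"
  assumes nonpos: "\<And>k. (H1 k - H2 k) \<bullet> k \<le> 0" and "s > 0"
  shows "(\<Sum>b\<in>Basis. H1 b \<bullet> b) / s + (p \<bullet> H1 p) / s^3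
    \<le> (\<Sum>b\<in>Basis. H2 b \<bullet> b) / s + (p \<bullet> H2 p) / s^3"
proof -
  have "(\<Sum>b\<in>Basis. H1 b \<bullet> b) \<le> (\<Sum>b\<in>Basis. H2 b \<bullet> b)"
    using nonpos by (intro sum_mono) (simp add: inner_diff_left)
  moreover have "p \<bullet> H1 p \<le> p \<bullet> H2 p"
    using nonpos[of p] by (simp add: inner_diff_left inner_diff_right inner_commute)
  ultimately show ?thesis
    using \<open>s > 0\<close> by (intro add_mono divide_right_mono) simp_all
qed

lemma translate_difference_local_max:
  fixes u :: "'a::real_inner \<Rightarrow> real"
  assumes grad: "\<forall>x\<in>\<Omega>. (u has_derivative (\<lambda>h. Du x \<bullet> h)) (at x)"
    and "r > 0" and ball: "\<forall>y\<in>ball y0 r. y \<in> \<Omega> \<and> y + c \<in> \<Omega>"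
    and max: "\<forall>y\<in>ball y0 r. u (y + c) - u y \<le> u (y0 + c) - u y0"
    and H1: "(Du has_derivative H1) (at (y0 + c))" and H2: "(Du has_derivative H2) (at y0)"
  shows "Du (y0 + c) = Du y0" and "(H1 k - H2 k) \<bullet> k \<le> 0"
proof -
  have grad_W: "\<forall>y\<in>ball y0 r.
      ((\<lambda>y. u (y + c) - u y) has_derivative (\<lambda>h. (Du (y + c) - Du y) \<bullet> h)) (at y)"
  proof
    fix y assume "y \<in> ball y0 r"
    then have "((\<lambda>y. u (y + c)) has_derivative (\<lambda>h. Du (y + c) \<bullet> h)) (at y)"
      and "(u has_derivative (\<lambda>h. Du y \<bullet> h)) (at y)"
      using grad ball by (auto intro: has_derivative_shift)
    from has_derivative_diff[OF this]
    show "((\<lambda>y. u (y + c) - u y) has_derivative (\<lambda>h. (Du (y + c) - Du y) \<bullet> h)) (at y)"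
      by (simp add: inner_diff_left)
  qed
  have "Du (y0 + c) - Du y0 = 0"
    using local_max_gradient_zero[of "ball y0 r" y0 "\<lambda>y. u (y + c) - u y"] max grad_W \<open>r > 0\<close>
    by force
  then show "Du (y0 + c) = Du y0"
    by simp
  have "((\<lambda>y. Du (y + c) - Du y) has_derivative (\<lambda>k. H1 k - H2 k)) (at y0)"
    using has_derivative_shift[OF H1] H2 by (auto intro!: derivative_eq_intros)
  then show "(H1 k - H2 k) \<bullet> k \<le> 0"
    using local_max_hessian_nonpos[OF \<open>r > 0\<close> max grad_W] by blast
qed

definition segment_domain :: "'a::real_vector set \<Rightarrow> 'a \<Rightarrow> 'a set" where
  "segment_domain \<Omega> v = {y. \<forall>t\<in>{0..1}. y + t *\<^sub>R v \<in> \<Omega>}"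

lemma segment_domain_subset: "segment_domain \<Omega> v \<subseteq> \<Omega>"
  unfolding segment_domain_def by (auto dest: bspec[of _ _ 0])

lemma segment_domain_translate_mem: "y \<in> segment_domain \<Omega> v \<Longrightarrow> y + v \<in> \<Omega>"
  unfolding segment_domain_def by (auto dest: bspec[of _ _ 1])

lemma centre_in_segment_domain:
  assumes "ball x r \<subseteq> \<Omega>" "norm v < r"
  shows "x \<in> segment_domain \<Omega> v"
  unfolding segment_domain_def
proof (intro CollectI ballI)
  fix t :: real assume "t \<in> {0..1}"
  then have "norm (t *\<^sub>R v) < r"
    using assms(2) mult_left_le_one_le[of "norm v" t] by simp
  then show "x + t *\<^sub>R v \<in> \<Omega>"
    using assms(1) by (auto simp: dist_norm)
qed

lemma open_segment_domain:
  fixes \<Omega> :: "'a::real_normed_vector set"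
  assumes "open \<Omega>"
  shows "open (segment_domain \<Omega> v)"
proof -
  let ?sums = "\<Union>x\<in>- \<Omega>. \<Union>w\<in>(\<lambda>t. - (t *\<^sub>R v)) ` {0..1}. {x + w}"
  have "closed ?sums"
    using assms by (intro closed_compact_sums compact_continuous_image continuous_intros)
      (auto simp: open_closed)
  moreover have "- segment_domain \<Omega> v = ?sums"
  proof (intro equalityI subsetI)
    fix y assume "y \<in> - segment_domain \<Omega> v"
    then obtain t where "t \<in> {0..1}" "y + t *\<^sub>R v \<notin> \<Omega>"
      unfolding segment_domain_def by blast
    then show "y \<in> ?sums"
      by (intro UN_I[of "y + t *\<^sub>R v"] UN_I[of "- (t *\<^sub>R v)"]) auto
  qed (force simp: segment_domain_def algebra_simps)
  ultimately show ?thesis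
    by (simp add: open_closed)
qed

lemma closure_segment_domain:
  fixes \<Omega> :: "'a::real_normed_vector set"
  assumes "y \<in> closure (segment_domain \<Omega> v)" "t \<in> {0..1}"
  shows "y + t *\<^sub>R v \<in> closure \<Omega>"
proof -
  have "(\<lambda>y. y + t *\<^sub>R v) ` segment_domain \<Omega> v \<subseteq> closure \<Omega>"
    using assms(2) closure_subset[of \<Omega>] unfolding segment_domain_def by blast
  then have "(\<lambda>y. y + t *\<^sub>R v) ` closure (segment_domain \<Omega> v) \<subseteq> closure \<Omega>"
    by (rule image_closure_subset[rotated 2]) (auto intro!: continuous_intros)
  then show ?thesis
    using assms(1) by blast
qed

lemma segment_meets_frontier:
  fixes \<Omega> :: "'a::real_normed_vector set"
  assumes "open \<Omega>" "y \<in> closure (segment_domain \<Omega> v)" "y \<notin> segment_domain \<Omega> v"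
  obtains t where "t \<in> {0..1}" "y + t *\<^sub>R v \<in> frontier \<Omega>"
proof -
  obtain t where "t \<in> {0..1}" "y + t *\<^sub>R v \<notin> \<Omega>"
    using assms(3) unfolding segment_domain_def by blast
  moreover have "y + t *\<^sub>R v \<in> closure \<Omega>"
    using closure_segment_domain[OF assms(2) \<open>t \<in> {0..1}\<close>] .
  ultimately show ?thesis
    using that assms(1) by (simp add: frontier_def interior_open)
qed

lemma continuous_on_translate_difference:
  fixes u :: "'a::real_normed_vector \<Rightarrow> real"
  assumes "continuous_on (closure \<Omega>) u"
  shows "continuous_on (closure (segment_domain \<Omega> v)) (\<lambda>y. u (y + v) - u y)"
proof -
  have "(\<lambda>y. y + t *\<^sub>R v) ` closure (segment_domain \<Omega> v) \<subseteq> closure \<Omega>" if "t \<in> {0..1}" for t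
    using closure_segment_domain that by blast
  from this[of 0] this[of 1] show ?thesis
    by (auto intro!: continuous_intros continuous_on_compose2[OF assms])
qed

lemma translate_difference_near_gradient:
  fixes u :: "'a::real_inner \<Rightarrow> real"
  assumes grad: "\<forall>x\<in>\<Omega>. (u has_derivative (\<lambda>h. Du x \<bullet> h)) (at x)"
    and "y \<in> segment_domain \<Omega> v"
    and close: "\<forall>t\<in>{0..1}. norm (Du (y + t *\<^sub>R v) - Du z) < \<epsilon>"
    and "v \<noteq> 0"
  shows "\<bar>u (y + v) - u y - Du z \<bullet> v\<bar> < \<epsilon> * norm v"
proof -
  have "((\<lambda>s. u (y + s *\<^sub>R v)) has_real_derivative Du (y + s *\<^sub>R v) \<bullet> v) (at s)"
    if "0 \<le> s" "s \<le> 1" for s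
    using grad \<open>y \<in> segment_domain \<Omega> v\<close> that
    by (intro has_real_derivative_along_line) (auto simp: segment_domain_def)
  from MVT2[OF zero_less_one this]
  obtain t where t: "0 < t" "t < 1" and mvt: "u (y + v) - u y = Du (y + t *\<^sub>R v) \<bullet> v"
    by auto
  have "\<bar>(Du (y + t *\<^sub>R v) - Du z) \<bullet> v\<bar> \<le> norm (Du (y + t *\<^sub>R v) - Du z) * norm v"
    by (rule Cauchy_Schwarz_ineq2)
  also have "\<dots> < \<epsilon> * norm v"
    using close t \<open>v \<noteq> 0\<close> by (simp add: mult_strict_right_mono)
  finally show ?thesis
    using mvt by (simp add: inner_diff_left)
qed

lemma translate_difference_near_gradient_closure:
  fixes u :: "'a::real_inner \<Rightarrow> real"
  assumes grad: "\<forall>x\<in>\<Omega>. (u has_derivative (\<lambda>h. Du x \<bullet> h)) (at x)"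
    and u_cont: "continuous_on (closure \<Omega>) u"
    and Du_close: "\<forall>x\<in>\<Omega>. dist x z < \<delta> \<longrightarrow> norm (Du x - Du z) < \<epsilon>"
    and y: "y \<in> closure (segment_domain \<Omega> v)" and near: "dist y z + norm v < \<delta>"
    and "v \<noteq> 0"
  shows "\<bar>u (y + v) - u y - Du z \<bullet> v\<bar> \<le> \<epsilon> * norm v"
proof -
  define N where "N = ball y (\<delta> - norm v - dist y z) \<inter> segment_domain \<Omega> v"
  have bound: "\<bar>u (y' + v) - u y' - Du z \<bullet> v\<bar> \<le> \<epsilon> * norm v" if "y' \<in> N" for y'
  proof -
    have "norm (Du (y' + t *\<^sub>R v) - Du z) < \<epsilon>" if "t \<in> {0..1}" for t
    proof -
      have "dist (y' + t *\<^sub>R v) z = norm ((y' - y) + ((y - z) + t *\<^sub>R v))"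
        by (simp add: dist_norm algebra_simps)
      also have "\<dots> \<le> norm (y' - y) + (norm (y - z) + norm (t *\<^sub>R v))"
        by (intro norm_triangle_le add_left_mono norm_triangle_ineq)
      also have "\<dots> < \<delta>"
        using \<open>y' \<in> N\<close> that mult_left_le_one_le[of "norm v" t]
        by (auto simp: N_def dist_norm norm_minus_commute)
      finally show ?thesis
        using Du_close \<open>y' \<in> N\<close> that by (auto simp: N_def segment_domain_def)
    qed
    moreover have "y' \<in> segment_domain \<Omega> v"
      using \<open>y' \<in> N\<close> by (simp add: N_def)
    ultimately show ?thesis
      using translate_difference_near_gradient[OF grad _ _ \<open>v \<noteq> 0\<close>] by (simp add: less_imp_le)
  qed
  have "y \<in> closure N"
    using open_Int_closure_subset[OF open_ball] y near unfolding N_def by fastforce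
  have "continuous_on (closure N) (\<lambda>y. u (y + v) - u y)"
    using continuous_on_translate_difference[OF u_cont]
    by (rule continuous_on_subset) (simp add: N_def closure_mono)
  then have "continuous_on (closure N) (\<lambda>y. \<bar>u (y + v) - u y - Du z \<bullet> v\<bar>)"
    by (rule continuous_on_rabs[OF continuous_on_diff[OF _ continuous_on_const]])
  from continuous_le_on_closure[OF this \<open>y \<in> closure N\<close> bound] show ?thesis .
qed

locale spacelike_solution =
  fixes \<Omega> :: "'a::euclidean_space set" and u :: "'a \<Rightarrow> real" and Du :: "'a \<Rightarrow> 'a"
    and \<alpha> :: real
  assumes open_domain: "open \<Omega>" and bounded_domain: "bounded \<Omega>"
    and alpha_neg: "\<alpha> < 0"
    and u_cont: "continuous_on (closure \<Omega>) u"
    and grad: "\<forall>x\<in>\<Omega>. (u has_derivative (\<lambda>h. Du x \<bullet> h)) (at x)"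
    and Du_cont: "continuous_on (closure \<Omega>) Du"
    and Du_diff: "\<forall>x\<in>\<Omega>. Du differentiable (at x)"
    and u_pos: "\<forall>x\<in>\<Omega>. u x > 0"
    and spacelike: "\<forall>x\<in>closure \<Omega>. norm (Du x) < 1"
    and eqn: "\<forall>x\<in>\<Omega>. divergence (\<lambda>y. Du y /\<^sub>R sqrt (1 - (norm (Du y))\<^sup>2)) x
                   = \<alpha> / (u x * sqrt (1 - (norm (Du x))\<^sup>2))"
begin

lemma translate_difference_no_positive_local_max:
  assumes "r > 0" and ball: "\<forall>y\<in>ball y0 r. y \<in> \<Omega> \<and> y + c \<in> \<Omega>"
    and max: "\<forall>y\<in>ball y0 r. u (y + c) - u y \<le> u (y0 + c) - u y0"
    and increment_pos: "u (y0 + c) > u y0"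
  shows False
proof -
  have y0: "y0 \<in> \<Omega>" "y0 + c \<in> \<Omega>"
    using ball \<open>r > 0\<close> by auto
  define H1 where "H1 = frechet_derivative Du (at (y0 + c))"
  define H2 where "H2 = frechet_derivative Du (at y0)"
  have H1: "(Du has_derivative H1) (at (y0 + c))" and H2: "(Du has_derivative H2) (at y0)"
    unfolding H1_def H2_def using Du_diff y0 frechet_derivative_works by blast+
  note local_max = translate_difference_local_max[OF grad \<open>r > 0\<close> ball max H1 H2]
  have "norm (Du y0) < 1"
    using spacelike y0 closure_subset by blast
  define s where "s = sqrt (1 - (norm (Du y0))\<^sup>2)"
  have "s > 0"
    using \<open>norm (Du y0) < 1\<close> by (simp add: s_def abs_square_less_1)
  have "\<alpha> / (u (y0 + c) * s) \<le> \<alpha> / (u y0 * s)"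
    using divergence_spacelike_flux[OF H1] divergence_spacelike_flux[OF H2]
      spacelike_flux_divergence_mono[OF local_max(2) \<open>s > 0\<close>, of "Du y0"]
      eqn y0 \<open>norm (Du y0) < 1\<close> local_max(1)
    by (simp add: s_def)
  moreover have "\<alpha> / (u y0 * s) < \<alpha> / (u (y0 + c) * s)"
    using u_pos y0 increment_pos alpha_neg \<open>s > 0\<close>
    by (simp add: divide_less_eq_1 field_simps mult_less_cancel_left_neg)
  ultimately show False
    by simp
qed

lemma translate_difference_max_outside_domain:
  assumes "x \<in> segment_domain \<Omega> v" and "u (x + v) > u x"
  obtains y where "y \<in> closure (segment_domain \<Omega> v)" "y \<notin> segment_domain \<Omega> v"
    and "u (x + v) - u x \<le> u (y + v) - u y"
proof -
  let ?D = "segment_domain \<Omega> v"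
  have "compact (closure ?D)"
    using bounded_subset[OF bounded_domain segment_domain_subset] by (simp add: compact_closure)
  then obtain y where y: "y \<in> closure ?D"
    and max: "\<forall>y'\<in>closure ?D. u (y' + v) - u y' \<le> u (y + v) - u y"
    using continuous_attains_sup[OF _ _ continuous_on_translate_difference[OF u_cont]]
      assms(1) closure_subset by blast
  have "y \<notin> ?D"
  proof
    assume "y \<in> ?D"
    then obtain r where "r > 0" "ball y r \<subseteq> ?D"
      using open_segment_domain[OF open_domain] open_contains_ball by blast
    show False
    proof (rule translate_difference_no_positive_local_max[OF \<open>r > 0\<close>])
      show "\<forall>y'\<in>ball y r. y' \<in> \<Omega> \<and> y' + v \<in> \<Omega>"
        using \<open>ball y r \<subseteq> ?D\<close> segment_domain_subset segment_domain_translate_mem by blast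
      show "\<forall>y'\<in>ball y r. u (y' + v) - u y' \<le> u (y + v) - u y"
        using \<open>ball y r \<subseteq> ?D\<close> max closure_subset by blast
      show "u (y + v) > u y"
        using max assms closure_subset by force
    qed
  qed
  then show ?thesis
    using that y max assms(1) closure_subset by blast
qed

lemma translate_difference_le_frontier_bound:
  assumes Du_close: "\<forall>x\<in>closure \<Omega>. \<forall>z\<in>closure \<Omega>. dist x z < \<delta> \<longrightarrow> norm (Du x - Du z) < \<epsilon>"
    and frontier_le: "\<forall>z\<in>frontier \<Omega>. norm (Du z) \<le> S"
    and "2 * norm v < \<delta>" "v \<noteq> 0"
    and "x \<in> segment_domain \<Omega> v" "u (x + v) > u x"
  shows "u (x + v) - u x \<le> (S + \<epsilon>) * norm v"
proof -
  obtain y where y: "y \<in> closure (segment_domain \<Omega> v)" "y \<notin> segment_domain \<Omega> v"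
    and "u (x + v) - u x \<le> u (y + v) - u y"
    using translate_difference_max_outside_domain assms(5,6) by blast
  obtain t where "t \<in> {0..1}" and frontier_point: "y + t *\<^sub>R v \<in> frontier \<Omega>"
    using segment_meets_frontier[OF open_domain y] .
  define z where "z = y + t *\<^sub>R v"
  have "dist y z + norm v < \<delta>"
    using \<open>t \<in> {0..1}\<close> \<open>2 * norm v < \<delta>\<close> mult_left_le_one_le[of "norm v" t]
    by (simp add: z_def dist_norm)
  moreover have "\<forall>x'\<in>\<Omega>. dist x' z < \<delta> \<longrightarrow> norm (Du x' - Du z) < \<epsilon>"
    using Du_close frontier_point closure_subset by (auto simp: z_def frontier_def)
  ultimately have "\<bar>u (y + v) - u y - Du z \<bullet> v\<bar> \<le> \<epsilon> * norm v"
    using translate_difference_near_gradient_closure[OF grad u_cont _ y(1) _ \<open>v \<noteq> 0\<close>] by blast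
  then have "u (y + v) - u y \<le> Du z \<bullet> v + \<epsilon> * norm v"
    by linarith
  also have "\<dots> \<le> (S + \<epsilon>) * norm v"
    using norm_cauchy_schwarz[of "Du z" v] frontier_le frontier_point
      mult_right_mono[of "norm (Du z)" S "norm v"]
    by (simp add: z_def algebra_simps)
  finally show ?thesis
    using \<open>u (x + v) - u x \<le> u (y + v) - u y\<close> by simp
qed

lemma interior_gradient_le_frontier_sup:
  assumes "x0 \<in> \<Omega>" and "frontier \<Omega> \<noteq> {}"
  shows "norm (Du x0) \<le> (SUP x\<in>frontier \<Omega>. norm (Du x))"
proof (rule ccontr)
  define S where "S = (SUP x\<in>frontier \<Omega>. norm (Du x))"
  define m where "m = norm (Du x0)"
  assume "\<not> norm (Du x0) \<le> (SUP x\<in>frontier \<Omega>. norm (Du x))"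
  then have "S < m"
    by (simp add: S_def m_def)
  have frontier_le: "\<forall>z\<in>frontier \<Omega>. norm (Du z) \<le> S"
    unfolding S_def using spacelike
    by (intro ballI cSUP_upper bdd_aboveI[of _ 1]) (auto simp: frontier_def intro: less_imp_le)
  then have "0 \<le> S"
    using \<open>frontier \<Omega> \<noteq> {}\<close> norm_ge_zero order_trans by blast
  define \<epsilon> where "\<epsilon> = (m - S) / 3"
  have "\<epsilon> > 0" "m > 0"
    using \<open>S < m\<close> \<open>0 \<le> S\<close> by (auto simp: \<epsilon>_def)
  obtain \<delta> where "\<delta> > 0" and Du_close:
      "\<forall>x\<in>closure \<Omega>. \<forall>z\<in>closure \<Omega>. dist x z < \<delta> \<longrightarrow> norm (Du x - Du z) < \<epsilon>"
    using compact_uniformly_continuous[OF Du_cont compact_closure[THEN iffD2, OF bounded_domain]]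
      \<open>\<epsilon> > 0\<close> unfolding uniformly_continuous_on_def dist_norm by metis
  obtain \<rho> where "\<rho> > 0" "ball x0 \<rho> \<subseteq> \<Omega>"
    using open_domain \<open>x0 \<in> \<Omega>\<close> open_contains_ball by blast
  define h where "h = min (\<delta> / 3) (\<rho> / 2)"
  define v where "v = (h / m) *\<^sub>R Du x0"
  have "h > 0" "2 * h < \<delta>" "h < \<rho>" "norm v = h" "v \<noteq> 0" "Du x0 \<bullet> v = m * h"
    using \<open>\<delta> > 0\<close> \<open>\<rho> > 0\<close> \<open>m > 0\<close>
    by (auto simp: h_def v_def m_def dot_square_norm power2_eq_square)
  have "x0 \<in> segment_domain \<Omega> v"
    using centre_in_segment_domain \<open>ball x0 \<rho> \<subseteq> \<Omega>\<close> \<open>norm v = h\<close> \<open>h < \<rho>\<close> by blast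
  moreover have "\<forall>x\<in>\<Omega>. dist x x0 < \<delta> \<longrightarrow> norm (Du x - Du x0) < \<epsilon>"
    using Du_close \<open>x0 \<in> \<Omega>\<close> closure_subset by blast
  moreover have "dist x0 x0 + norm v < \<delta>"
    using \<open>norm v = h\<close> \<open>2 * h < \<delta>\<close> \<open>h > 0\<close> by simp
  ultimately have "\<bar>u (x0 + v) - u x0 - Du x0 \<bullet> v\<bar> \<le> \<epsilon> * norm v"
    using translate_difference_near_gradient_closure[OF grad u_cont _ _ _ \<open>v \<noteq> 0\<close>]
      closure_subset by blast
  then have "\<bar>u (x0 + v) - u x0 - m * h\<bar> \<le> \<epsilon> * h"
    using \<open>norm v = h\<close> \<open>Du x0 \<bullet> v = m * h\<close> by simp
  moreover have "m * h - \<epsilon> * h = (S + 2 * \<epsilon>) * h"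
    by (simp add: \<epsilon>_def field_simps)
  ultimately have lower: "(S + 2 * \<epsilon>) * h \<le> u (x0 + v) - u x0"
    by linarith
  moreover have "0 < (S + 2 * \<epsilon>) * h" "(S + \<epsilon>) * h < (S + 2 * \<epsilon>) * h"
    using \<open>0 \<le> S\<close> \<open>\<epsilon> > 0\<close> \<open>h > 0\<close> by simp_all
  ultimately have "u x0 < u (x0 + v)"
    by linarith
  then have "u (x0 + v) - u x0 \<le> (S + \<epsilon>) * h"
    using translate_difference_le_frontier_bound[OF Du_close frontier_le _ \<open>v \<noteq> 0\<close>
        \<open>x0 \<in> segment_domain \<Omega> v\<close>] \<open>norm v = h\<close> \<open>2 * h < \<delta>\<close> by simp
  with lower \<open>(S + \<epsilon>) * h < (S + 2 * \<epsilon>) * h\<close> show False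
    by linarith
qed

end

theorem proposition4p7:
  fixes \<Omega> :: "'a::euclidean_space set"
    and u \<phi> :: "'a \<Rightarrow> real"
    and Du :: "'a \<Rightarrow> 'a"
    and \<alpha> :: real
  assumes domain: "open \<Omega>" "connected \<Omega>" "bounded \<Omega>" "\<Omega> \<noteq> {}"
    and alpha: "\<alpha> < 0"
    \<comment> \<open>u \<in> C^1(closure \<Omega>): u continuous on the closure, with gradient Du in \<Omega>
        extending continuously to the closure\<close>
    and u_cont: "continuous_on (closure \<Omega>) u"
    and grad: "\<forall>x\<in>\<Omega>. (u has_derivative (\<lambda>h. Du x \<bullet> h)) (at x)"
    and Du_cont: "continuous_on (closure \<Omega>) Du"
    \<comment> \<open>u \<in> C^2(\<Omega>): Du differentiable in \<Omega> with continuous second partials\<close>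
    and Du_diff: "\<forall>x\<in>\<Omega>. Du differentiable (at x)"
    and D2_cont: "\<forall>b\<in>Basis. continuous_on \<Omega> (\<lambda>x. frechet_derivative Du (at x) b)"
    \<comment> \<open>positive solution\<close>
    and u_pos: "\<forall>x\<in>\<Omega>. u x > 0"
    and spacelike: "\<forall>x\<in>closure \<Omega>. norm (Du x) < 1"
    and eqn: "\<forall>x\<in>\<Omega>. divergence (\<lambda>y. Du y /\<^sub>R sqrt (1 - (norm (Du y))\<^sup>2)) x
                   = \<alpha> / (u x * sqrt (1 - (norm (Du x))\<^sup>2))"
    and phi_pos: "\<forall>x\<in>frontier \<Omega>. \<phi> x > 0"
    and boundary: "\<forall>x\<in>frontier \<Omega>. u x = \<phi> x"
  shows "(SUP x\<in>closure \<Omega>. norm (Du x)) = (SUP x\<in>frontier \<Omega>. norm (Du x))"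
proof -
  interpret spacelike_solution \<Omega> u Du \<alpha>
    using domain alpha u_cont grad Du_cont Du_diff u_pos spacelike eqn by unfold_locales auto
  have "frontier \<Omega> \<noteq> {}"
    using frontier_not_empty[OF domain(4)] not_bounded_UNIV domain(3) by blast
  have closure_split: "closure \<Omega> = \<Omega> \<union> frontier \<Omega>"
    using domain(1) closure_subset by (auto simp: frontier_def interior_open)
  have bdd: "bdd_above ((\<lambda>x. norm (Du x)) ` closure \<Omega>)"
    using spacelike by (intro bdd_aboveI[of _ 1]) (auto intro: less_imp_le)
  show ?thesis
  proof (rule antisym)
    show "(SUP x\<in>closure \<Omega>. norm (Du x)) \<le> (SUP x\<in>frontier \<Omega>. norm (Du x))"
    proof (rule cSUP_least)
      show "closure \<Omega> \<noteq> {}"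
        using domain(4) by simp
      fix x assume "x \<in> closure \<Omega>"
      then consider "x \<in> \<Omega>" | "x \<in> frontier \<Omega>"
        using closure_split by blast
      then show "norm (Du x) \<le> (SUP x\<in>frontier \<Omega>. norm (Du x))"
      proof cases
        case 1
        then show ?thesis
          using interior_gradient_le_frontier_sup \<open>frontier \<Omega> \<noteq> {}\<close> by blast
      next
        case 2
        then show ?thesis
          using closure_split by (intro cSUP_upper bdd_above_mono[OF bdd]) auto
      qed
    qed
    show "(SUP x\<in>frontier \<Omega>. norm (Du x)) \<le> (SUP x\<in>closure \<Omega>. norm (Du x))"
      using closure_split by (intro cSUP_subset_mono[OF \<open>frontier \<Omega> \<noteq> {}\<close> bdd]) auto
  qed
qed

end
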